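(* Let $X$ be a Banach lattice with order continuous norm, and let $S$ be a convex $C_0$-semigroup on $X$ with generator $A\colon D(A)\subset X\to X$. Then $A$ is closed: for every sequence $(x_n)_{n\in\mathbb N}$ in $D(A)$ with $x_n\to x\in X$ and $Ax_n\to y\in X$, it holds $x\in D(A)$ and $Ax=y$.
   Context: A Banach lattice $X$ has order continuous norm if $\|x_\alpha\|\to 0$ for every net $x_\alpha\downarrow 0$. An operator $T\colon X\to X$ is convex if $T(\lambda x+(1-\lambda)y)\le \lambda Tx+(1-\lambda)Ty$ for all $x,y$, $\lambda\in[0,1]$, and bounded if $\sup_{\|x\|\le r}\|Tx\|<\infty$ for all $r>0$. A convex $C_0$-semigroup is a family $(S(t))_{t\ge0}$ of bounded convex operators $X\to X$ with $S(0)=\mathrm{id}$, $S(t+s)=S(t)S(s)$ for all $s,t\ge0$, and $S(t)x\to x$ as $t\downarrow 0$ for all $x$. Its generator is $Ax:=\lim_{h\downarrow 0}\frac{S(h)x-x}{h}$ with domain $D(A)$ the set of $x$ for which this norm limit exists. *)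

theory Defs
  imports "HOL-Analysis.Analysis"
begin

class banach_lattice = banach + ordered_real_vector + lattice +
  assumes lattice_norm: "sup x (- x) \<le> sup y (- y) \<Longrightarrow> norm x \<le> norm y"

definition down_directed :: "'a::order set \<Rightarrow> bool" where
  "down_directed D \<longleftrightarrow> D \<noteq> {} \<and> (\<forall>x\<in>D. \<forall>y\<in>D. \<exists>z\<in>D. z \<le> x \<and> z \<le> y)"

text \<open>Order continuous norm: for every net x_alpha decreasing to 0, norm x_alpha \<rightarrow> 0.
  A decreasing net is represented by a downward directed set D (indexed by itself,
  with the reversed order); "decreasing to 0" means 0 is the infimum of D.\<close>
definition order_continuous_norm :: "'a::banach_lattice itself \<Rightarrow> bool" where
  "order_continuous_norm _ \<longleftrightarrow>
     (\<forall>D::'a set. down_directed D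
        \<and> (\<forall>d\<in>D. 0 \<le> d) \<and> (\<forall>z. (\<forall>d\<in>D. z \<le> d) \<longrightarrow> z \<le> 0)
        \<longrightarrow> (\<forall>e>0. \<exists>d0\<in>D. \<forall>d\<in>D. d \<le> d0 \<longrightarrow> norm d < e))"

definition convex_op :: "('a::banach_lattice \<Rightarrow> 'a) \<Rightarrow> bool" where
  "convex_op T \<longleftrightarrow> (\<forall>x y. \<forall>l::real. 0 \<le> l \<and> l \<le> 1 \<longrightarrow>
      T (l *\<^sub>R x + (1 - l) *\<^sub>R y) \<le> l *\<^sub>R T x + (1 - l) *\<^sub>R T y)"

definition bounded_op :: "('a::real_normed_vector \<Rightarrow> 'b::real_normed_vector) \<Rightarrow> bool" where
  "bounded_op T \<longleftrightarrow> (\<forall>r>0. \<exists>M. \<forall>x. norm x \<le> r \<longrightarrow> norm (T x) \<le> M)"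

definition convex_C0_semigroup :: "(real \<Rightarrow> 'a::banach_lattice \<Rightarrow> 'a) \<Rightarrow> bool" where
  "convex_C0_semigroup S \<longleftrightarrow>
     (\<forall>t\<ge>0. convex_op (S t) \<and> bounded_op (S t))
     \<and> S 0 = id
     \<and> (\<forall>s\<ge>0. \<forall>t\<ge>0. S (t + s) = S t \<circ> S s)
     \<and> (\<forall>x. ((\<lambda>t. S t x) \<longlongrightarrow> x) (at_right 0))"

definition gen_domain :: "(real \<Rightarrow> 'a::real_normed_vector \<Rightarrow> 'a) \<Rightarrow> 'a set" where
  "gen_domain S = {x. \<exists>y. ((\<lambda>h. (1 / h) *\<^sub>R (S h x - x)) \<longlongrightarrow> y) (at_right 0)}"

definition generator :: "(real \<Rightarrow> 'a::real_normed_vector \<Rightarrow> 'a) \<Rightarrow> 'a \<Rightarrow> 'a" where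
  "generator S x = Lim (at_right 0) (\<lambda>h. (1 / h) *\<^sub>R (S h x - x))"

end

theory Submission
  imports Defs
begin

(* Since the norm is a lattice norm, a \<le> b \<le> c implies norm b \<le> norm a + norm c, so order
   inequalities coming from convexity turn into norm estimates.  In particular bounded convex
   operators are locally Lipschitz, and a Baire category argument turns strong continuity into
   bounds for S t, uniform for small t and locally in x, hence uniform local Lipschitz bounds.

   For w in D(A) with A w = v, convexity of S t sandwiches S t (w + d v) - S t w between
   d (S t w - S t (w - v)) and d (S t (w + v) - S t w).  Splitting [0, h] into steps of length d
   and using the semigroup law bounds norm ((S h w - w) / h - v) by the supremum over t \<le> h of
   norm (S t (w + v) - S t w - v) + norm (S t w - S t (w - v) - v).  For w = x_n, v = A x_n this
   is small for small h, uniformly in large n, since S t q \<rightarrow> p uniformly for q near p as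
   t \<rightarrow> 0; letting n \<rightarrow> \<infinity> at fixed h gives (S h x - x) / h \<rightarrow> y. *)

lemma sup_uminus_nonneg: "0 \<le> sup x (- x :: 'a::banach_lattice)"
proof -
  have "0 \<le> sup x (- x) + sup x (- x)"
    using add_mono[of x "sup x (- x)" "- x" "sup x (- x)"] by simp
  then have "0 \<le> (1/2::real) *\<^sub>R (sup x (- x) + sup x (- x))"
    by (rule scaleR_nonneg_nonneg[rotated]) simp
  then show ?thesis
    by (simp add: scaleR_add_right[symmetric] scaleR_2[symmetric])
qed

lemma sup_uminus_eq_self: "0 \<le> x \<Longrightarrow> sup x (- x) = (x :: 'a::banach_lattice)"
  by (rule sup_absorb1) (meson neg_le_0_iff_le order_trans)

lemma norm_sup_uminus: "norm (sup x (- x)) = norm (x :: 'a::banach_lattice)"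
  using sup_uminus_eq_self[OF sup_uminus_nonneg, of x]
  by (intro antisym lattice_norm) simp_all

lemma norm_le_norm_add_norm_if_between:
  fixes a b c :: "'a::banach_lattice"
  assumes "a \<le> b" "b \<le> c"
  shows "norm b \<le> norm a + norm c"
proof -
  define p where "p = sup a (- a) + sup c (- c)"
  have "0 \<le> p"
    unfolding p_def by (intro add_nonneg_nonneg sup_uminus_nonneg)
  have "b \<le> p"
    using assms(2) sup_uminus_nonneg[of a]
    unfolding p_def by (meson add_increasing order_trans sup_ge1)
  moreover have "- b \<le> p"
    using assms(1) sup_uminus_nonneg[of c]
    unfolding p_def by (meson add_increasing2 neg_le_iff_le order_trans sup_ge2)
  ultimately have "sup b (- b) \<le> sup p (- p)"
    using sup_uminus_eq_self[OF \<open>0 \<le> p\<close>] by simp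
  then have "norm b \<le> norm p"
    by (rule lattice_norm)
  also have "\<dots> \<le> norm a + norm c"
    using norm_triangle_ineq[of "sup a (- a)" "sup c (- c)"] by (simp add: p_def norm_sup_uminus)
  finally show ?thesis .
qed

lemma convex_opD:
  "convex_op T \<Longrightarrow> 0 \<le> l \<Longrightarrow> l \<le> 1 \<Longrightarrow> T (l *\<^sub>R a + (1 - l) *\<^sub>R b) \<le> l *\<^sub>R T a + (1 - l) *\<^sub>R T b"
  unfolding convex_op_def by blast

lemma convex_op_increment_le:
  assumes "convex_op T" "0 \<le> l" "l \<le> 1"
  shows "T (w + l *\<^sub>R v) - T w \<le> l *\<^sub>R (T (w + v) - T w)"
proof -
  have "T (l *\<^sub>R (w + v) + (1 - l) *\<^sub>R w) \<le> l *\<^sub>R T (w + v) + (1 - l) *\<^sub>R T w"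
    using convex_opD[OF assms] .
  then show ?thesis
    by (simp add: algebra_simps)
qed

lemma convex_op_increment_ge:
  assumes "convex_op T" "0 \<le> l"
  shows "l *\<^sub>R (T w - T (w - v)) \<le> T (w + l *\<^sub>R v) - T w"
proof -
  have "T (w - v + (1 / (1 + l)) *\<^sub>R ((1 + l) *\<^sub>R v)) - T (w - v)
      \<le> (1 / (1 + l)) *\<^sub>R (T (w - v + (1 + l) *\<^sub>R v) - T (w - v))"
    using assms by (intro convex_op_increment_le) auto
  moreover have "w - v + (1 / (1 + l)) *\<^sub>R ((1 + l) *\<^sub>R v) = w"
    using assms(2) by simp
  moreover have "w - v + (1 + l) *\<^sub>R v = w + l *\<^sub>R v"
    by (simp add: algebra_simps)
  ultimately have "T w - T (w - v) \<le> (1 / (1 + l)) *\<^sub>R (T (w + l *\<^sub>R v) - T (w - v))"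
    by simp
  then have "(1 + l) *\<^sub>R (T w - T (w - v)) \<le> (1 + l) *\<^sub>R ((1 / (1 + l)) *\<^sub>R (T (w + l *\<^sub>R v) - T (w - v)))"
    using assms(2) by (intro scaleR_left_mono) auto
  also have "\<dots> = T (w + l *\<^sub>R v) - T (w - v)"
    using assms(2) by simp
  finally show ?thesis
    by (simp add: algebra_simps)
qed

lemma convex_op_increment_norm_le:
  assumes "convex_op T" "0 \<le> l" "l \<le> 1"
  shows "norm (T (w + l *\<^sub>R v) - T w - l *\<^sub>R c)
    \<le> l * (norm (T (w + v) - T w - c) + norm (T w - T (w - v) - c))"
proof -
  have "l *\<^sub>R (T w - T (w - v) - c) \<le> T (w + l *\<^sub>R v) - T w - l *\<^sub>R c"
    using convex_op_increment_ge[OF assms(1,2), of w v] by (simp add: scaleR_diff_right)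
  moreover have "T (w + l *\<^sub>R v) - T w - l *\<^sub>R c \<le> l *\<^sub>R (T (w + v) - T w - c)"
    using convex_op_increment_le[OF assms, of w v] by (simp add: scaleR_diff_right)
  ultimately have "norm (T (w + l *\<^sub>R v) - T w - l *\<^sub>R c)
      \<le> norm (l *\<^sub>R (T w - T (w - v) - c)) + norm (l *\<^sub>R (T (w + v) - T w - c))"
    by (rule norm_le_norm_add_norm_if_between)
  then show ?thesis
    using assms(2) by (simp add: distrib_left)
qed

lemma convex_op_lipschitz_on_cball:
  assumes "convex_op T" "0 < r" and bound: "\<And>u. u \<in> cball x (3 * r) \<Longrightarrow> norm (T u) \<le> M"
  shows "(2 * M / r)-lipschitz_on (cball x r) T"
proof (rule lipschitz_onI)
  have "0 \<le> M"
    using order_trans[OF norm_ge_zero bound[of x]] assms(2) by simp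
  then show "0 \<le> 2 * M / r"
    using assms(2) by simp
  fix y z assume y: "y \<in> cball x r" and z: "z \<in> cball x r"
  show "dist (T y) (T z) \<le> 2 * M / r * dist y z"
  proof (cases "y = z")
    case False
    define l where "l = dist y z / (2 * r)"
    define v where "v = (2 * r / dist y z) *\<^sub>R (y - z)"
    have "dist y z \<le> 2 * r"
      using y z dist_triangle[of y z x] by (simp add: dist_commute)
    then have l: "0 \<le> l" "l \<le> 1"
      using assms(2) by (simp_all add: l_def)
    have "y = z + l *\<^sub>R v"
      using False assms(2) by (simp add: l_def v_def dist_norm)
    have "norm v = 2 * r"
      using False assms(2) by (simp add: v_def dist_norm)
    then have "norm (T (z + v)) \<le> M" "norm (T (z - v)) \<le> M" "norm (T z) \<le> M"
      using z assms(2) dist_triangle[of x "z + v" z] dist_triangle[of x "z - v" z]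
      by (simp_all add: dist_norm bound)
    then have "norm (T (z + v) - T z) + norm (T z - T (z - v)) \<le> 4 * M"
      using norm_triangle_ineq4[of "T (z + v)" "T z"] norm_triangle_ineq4[of "T z" "T (z - v)"]
      by linarith
    moreover have "norm (T y - T z) \<le> l * (norm (T (z + v) - T z) + norm (T z - T (z - v)))"
      using convex_op_increment_norm_le[OF assms(1) l, of z v 0] \<open>y = z + l *\<^sub>R v\<close> by simp
    ultimately have "norm (T y - T z) \<le> l * (4 * M)"
      using l(1) by (meson mult_left_mono order_trans)
    then show ?thesis
      using assms(2) by (simp add: l_def dist_norm field_simps)
  qed simp
qed

lemma convex_bounded_op_continuous:
  fixes T :: "'a::banach_lattice \<Rightarrow> 'a"
  assumes "convex_op T" "bounded_op T"
  shows "continuous_on UNIV T"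
proof (rule continuous_at_imp_continuous_on, rule ballI)
  fix x :: 'a
  define r where "r = norm x + 1"
  have "r > 0"
    by (simp add: r_def add_nonneg_pos)
  obtain M where M: "\<And>u. norm u \<le> 4 * r \<Longrightarrow> norm (T u) \<le> M"
    using assms(2) \<open>r > 0\<close> unfolding bounded_op_def by (meson mult_pos_pos zero_less_numeral)
  have "norm u \<le> 4 * r" if "u \<in> cball x (3 * r)" for u
    using that norm_triangle_sub[of u x] by (simp add: r_def dist_norm norm_minus_commute)
  then have "(2 * M / r)-lipschitz_on (cball x r) T"
    using M by (intro convex_op_lipschitz_on_cball[OF assms(1) \<open>r > 0\<close>]) auto
  then show "isCont T x"
    using \<open>r > 0\<close> mem_interior_cball[of x "cball x r"]
    by (intro continuous_on_interior[OF lipschitz_on_continuous_on]) auto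
qed

lemma convex_op_midpoint_le: "convex_op T \<Longrightarrow> T (midpoint a b) \<le> midpoint (T a) (T b)"
  using convex_opD[of T "1/2" a b] by (simp add: midpoint_def scaleR_add_right)

lemma norm_midpoint_le: "norm (midpoint a b) \<le> (norm a + norm b) / 2"
  using norm_triangle_ineq[of a b] by (simp add: midpoint_def)

lemma convex_op_bounded_on_ball_transfer:
  assumes "convex_op T" and bound: "\<And>u. u \<in> ball z0 \<rho> \<Longrightarrow> norm (T u) \<le> m"
    and z: "z \<in> ball x (\<rho> / 2)"
  shows "norm (T z) \<le> 2 * norm (T x) + norm (T (2 *\<^sub>R x - z0)) + m"
proof -
  (* z is the midpoint of p and a point of ball z0 \<rho>, and x the midpoint of z and 2 x - z *)
  define p where "p = 2 *\<^sub>R x - z0"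
  define U where "U z = midpoint (T p) (T (z0 + 2 *\<^sub>R (z - x)))" for z
  have U: "T z \<le> U z" "norm (U z) \<le> (norm (T p) + m) / 2" if "z \<in> ball x (\<rho> / 2)" for z
  proof -
    have "midpoint p (z0 + 2 *\<^sub>R (z - x)) = z"
      by (simp add: midpoint_def p_def algebra_simps)
    then show "T z \<le> U z"
      unfolding U_def by (metis convex_op_midpoint_le[OF assms(1)])
    have "z0 + 2 *\<^sub>R (z - x) \<in> ball z0 \<rho>"
      using that by (simp add: dist_norm norm_minus_commute)
    have "norm (U z) \<le> (norm (T p) + norm (T (z0 + 2 *\<^sub>R (z - x)))) / 2"
      unfolding U_def by (rule norm_midpoint_le)
    also have "\<dots> \<le> (norm (T p) + m) / 2"
      using bound[OF \<open>z0 + 2 *\<^sub>R (z - x) \<in> ball z0 \<rho>\<close>] by simp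
    finally show "norm (U z) \<le> (norm (T p) + m) / 2" .
  qed
  define z' where "z' = 2 *\<^sub>R x - z"
  have "x - z' = z - x"
    by (simp add: z'_def scaleR_2)
  then have z': "z' \<in> ball x (\<rho> / 2)"
    using z by (simp add: dist_norm norm_minus_commute)
  have "midpoint z z' = x"
    by (simp add: midpoint_def z'_def scaleR_2)
  then have "T x \<le> midpoint (T z) (T z')"
    by (metis convex_op_midpoint_le[OF assms(1)])
  then have "2 *\<^sub>R T x \<le> 2 *\<^sub>R midpoint (T z) (T z')"
    by (rule scaleR_left_mono) simp
  also have "\<dots> = T z + T z'"
    by (simp add: midpoint_def)
  also have "\<dots> \<le> T z + U z'"
    using U(1)[OF z'] by (rule add_left_mono)
  finally have "2 *\<^sub>R T x - U z' \<le> T z"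
    by (simp add: diff_le_eq add.commute)
  then have "norm (T z) \<le> norm (2 *\<^sub>R T x - U z') + norm (U z)"
    using U(1)[OF z] by (rule norm_le_norm_add_norm_if_between)
  also have "\<dots> \<le> 2 * norm (T x) + norm (U z') + norm (U z)"
    using norm_triangle_ineq4[of "2 *\<^sub>R T x" "U z'"] by simp
  finally show ?thesis
    using U(2)[OF z] U(2)[OF z'] by (simp add: p_def)
qed

lemma banach_closed_cover_interior:
  fixes F :: "nat \<Rightarrow> 'a::banach set"
  assumes "\<And>n. closed (F n)" and "(\<Union>n. F n) = UNIV"
  shows "\<exists>n. interior (F n) \<noteq> {}"
proof (rule ccontr)
  assume "\<nexists>n. interior (F n) \<noteq> {}"
  then have "euclidean interior_of (\<Union>(range F)) = {}"
    using assms(1) by (intro Baire_category_alt)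
      (auto simp: completely_metrizable_space_euclidean closed_closedin[symmetric])
  then show False
    using assms(2) by simp
qed

lemma eventually_at_right_0_fraction:
  fixes h :: real
  assumes "eventually P (at_right 0)" "0 < h"
  shows "\<exists>m>0. P (h / real m)"
proof -
  have "(\<lambda>m. h / real m) \<longlonglongrightarrow> 0"
    by (intro tendsto_divide_0[OF tendsto_const] filterlim_at_top_imp_at_infinity
        filterlim_real_sequentially)
  moreover have "eventually (\<lambda>m. h / real m \<in> {0<..} \<and> h / real m \<noteq> 0) sequentially"
    using eventually_gt_at_top[of 0] by eventually_elim (use assms(2) in auto)
  ultimately have "filterlim (\<lambda>m. h / real m) (at_right 0) sequentially"
    by (simp add: filterlim_at)
  then have "eventually (\<lambda>m. P (h / real m)) sequentially"
    by (rule eventually_compose_filterlim[OF assms(1)])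
  then have "eventually (\<lambda>m. P (h / real m) \<and> 0 < m) sequentially"
    using eventually_gt_at_top[of 0] by (rule eventually_conj)
  then show ?thesis
    using eventually_happens'[OF sequentially_bot] by blast
qed

lemma norm_average_difference_quotient_le:
  fixes f :: "nat \<Rightarrow> 'a::real_normed_vector"
  assumes "0 < m" "0 < \<delta>" and bound: "\<And>k. k < m \<Longrightarrow> norm ((1 / \<delta>) *\<^sub>R (f (Suc k) - f k) - v) \<le> B"
  shows "norm ((1 / (real m * \<delta>)) *\<^sub>R (f m - f 0) - v) \<le> B"
proof -
  have "(\<Sum>k<m. (1 / \<delta>) *\<^sub>R (f (Suc k) - f k) - v)
      = (1 / \<delta>) *\<^sub>R (\<Sum>k<m. f (Suc k) - f k) - (\<Sum>k<m. v)"
    by (simp only: sum_subtractf[of "\<lambda>k. (1 / \<delta>) *\<^sub>R (f (Suc k) - f k)" "\<lambda>k. v"] scaleR_sum_right)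
  also have "\<dots> = (1 / \<delta>) *\<^sub>R (f m - f 0) - real m *\<^sub>R v"
    by (simp only: sum_lessThan_telescope) (simp add: sum_constant_scaleR)
  finally have "(1 / (real m * \<delta>)) *\<^sub>R (f m - f 0) - v
      = (1 / real m) *\<^sub>R (\<Sum>k<m. (1 / \<delta>) *\<^sub>R (f (Suc k) - f k) - v)"
    using assms(1) by (simp add: scaleR_diff_right)
  moreover have "norm (\<Sum>k<m. (1 / \<delta>) *\<^sub>R (f (Suc k) - f k) - v) \<le> (\<Sum>k<m. B)"
    by (rule order_trans[OF norm_sum sum_mono]) (simp add: bound)
  ultimately show ?thesis
    using assms(1) by (simp add: field_simps)
qed

lemma convex_op_difference_quotient_step:
  assumes "convex_op T" "L-lipschitz_on U T" "a \<in> U" "w + \<delta> *\<^sub>R v \<in> U" "0 < \<delta>" "\<delta> \<le> 1"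
  shows "norm ((1 / \<delta>) *\<^sub>R (T a - T w) - v)
    \<le> norm (T (w + v) - T w - v) + norm (T w - T (w - v) - v) + L * norm ((1 / \<delta>) *\<^sub>R (a - w) - v)"
proof -
  have "(1 / \<delta>) *\<^sub>R (T a - T w) - v
      = (1 / \<delta>) *\<^sub>R (T (w + \<delta> *\<^sub>R v) - T w - \<delta> *\<^sub>R v) + (1 / \<delta>) *\<^sub>R (T a - T (w + \<delta> *\<^sub>R v))"
    using assms(5) by (simp add: algebra_simps)
  then have "norm ((1 / \<delta>) *\<^sub>R (T a - T w) - v)
      \<le> norm ((1 / \<delta>) *\<^sub>R (T (w + \<delta> *\<^sub>R v) - T w - \<delta> *\<^sub>R v)) + norm ((1 / \<delta>) *\<^sub>R (T a - T (w + \<delta> *\<^sub>R v)))"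
    by (metis norm_triangle_ineq)
  also have "\<dots> = (1 / \<delta>) * (norm (T (w + \<delta> *\<^sub>R v) - T w - \<delta> *\<^sub>R v) + norm (T a - T (w + \<delta> *\<^sub>R v)))"
    using assms(5) by (simp add: distrib_left)
  also have "\<dots> \<le> (1 / \<delta>) * (\<delta> * (norm (T (w + v) - T w - v) + norm (T w - T (w - v) - v))
      + \<delta> * (L * norm ((1 / \<delta>) *\<^sub>R (a - w) - v)))"
  proof (intro mult_left_mono add_mono)
    show "norm (T (w + \<delta> *\<^sub>R v) - T w - \<delta> *\<^sub>R v)
        \<le> \<delta> * (norm (T (w + v) - T w - v) + norm (T w - T (w - v) - v))"
      using assms(5,6) by (intro convex_op_increment_norm_le[OF assms(1)]) auto
    have "a - (w + \<delta> *\<^sub>R v) = \<delta> *\<^sub>R ((1 / \<delta>) *\<^sub>R (a - w) - v)"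
      using assms(5) by (simp add: algebra_simps)
    then show "norm (T a - T (w + \<delta> *\<^sub>R v)) \<le> \<delta> * (L * norm ((1 / \<delta>) *\<^sub>R (a - w) - v))"
      using lipschitz_on_normD[OF assms(2-4)] assms(5) by (simp add: mult.left_commute)
  qed (use assms(5) in simp)
  finally show ?thesis
    using assms(5) by (simp add: distrib_left)
qed

lemma norm_diff_diff_le: "norm (a - b - v) \<le> norm (a - p) + norm (b - q) + norm (p - q - v)"
  for a :: "'a::real_normed_vector"
  using norm_triangle_ineq4[of "a - p" "b - q"] norm_triangle_ineq[of "(a - p) - (b - q)" "p - q - v"]
  by (simp add: algebra_simps)

context
  fixes S :: "real \<Rightarrow> 'a::banach_lattice \<Rightarrow> 'a"
  assumes semigroup: "convex_C0_semigroup S"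
begin

lemma semigroup_convex: "0 \<le> t \<Longrightarrow> convex_op (S t)"
  using semigroup unfolding convex_C0_semigroup_def by blast

lemma semigroup_continuous: "0 \<le> t \<Longrightarrow> continuous_on UNIV (S t)"
  using semigroup unfolding convex_C0_semigroup_def by (blast intro: convex_bounded_op_continuous)

lemma semigroup_zero: "S 0 x = x"
  using semigroup unfolding convex_C0_semigroup_def by simp

lemma semigroup_add: "0 \<le> s \<Longrightarrow> 0 \<le> t \<Longrightarrow> S (t + s) x = S t (S s x)"
  using semigroup unfolding convex_C0_semigroup_def by simp

lemma semigroup_tendsto_at_right_0: "((\<lambda>t. S t x) \<longlongrightarrow> x) (at_right 0)"
  using semigroup unfolding convex_C0_semigroup_def by blast

lemma semigroup_near_identity:
  assumes "0 < e"
  shows "\<exists>\<tau>>0. \<forall>t\<in>{0..\<tau>}. norm (S t x - x) < e"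
proof -
  obtain \<tau> where "\<tau> > 0" and \<tau>: "\<And>t. 0 < t \<Longrightarrow> t < \<tau> \<Longrightarrow> norm (S t x - x) < e"
    using tendstoD[OF semigroup_tendsto_at_right_0 assms, of x]
    by (auto simp: eventually_at_right_field dist_norm)
  have "norm (S t x - x) < e" if "t \<in> {0..\<tau> / 2}" for t
    using that \<tau>[of t] \<open>\<tau> > 0\<close> assms by (cases "t = 0") (auto simp: semigroup_zero)
  then show ?thesis
    using \<open>\<tau> > 0\<close> by (intro exI[of _ "\<tau> / 2"]) auto
qed

lemma semigroup_bounded_on_some_ball:
  "\<exists>z0 \<rho> t1 m. 0 < \<rho> \<and> 0 < t1 \<and> (\<forall>t\<in>{0..t1}. \<forall>u\<in>ball z0 \<rho>. norm (S t u) \<le> m)"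
proof -
  define F where "F n = {z. \<forall>t\<in>{0..1 / real (Suc n)}. norm (S t z) \<le> real n}" for n
  have "closed (F n)" for n
  proof -
    have "F n = (\<Inter>t\<in>{0..1 / real (Suc n)}. {z. norm (S t z) \<le> real n})"
      by (auto simp: F_def)
    then show ?thesis
      using semigroup_continuous
      by (auto intro!: closed_INT closed_Collect_le continuous_on_norm)
  qed
  moreover have "z \<in> (\<Union>n. F n)" for z
  proof -
    obtain \<tau> where "\<tau> > 0" and \<tau>: "\<And>t. t \<in> {0..\<tau>} \<Longrightarrow> norm (S t z - z) < 1"
      using semigroup_near_identity[of 1 z] by auto
    obtain n where n: "max (norm z + 1) (1 / \<tau>) \<le> real n"
      using real_arch_simple by blast
    then have "1 / real (Suc n) \<le> \<tau>"
      using \<open>\<tau> > 0\<close> by (simp add: field_simps)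
    then have "norm (S t z) \<le> real n" if "t \<in> {0..1 / real (Suc n)}" for t
      using \<tau>[of t] that n norm_triangle_sub[of "S t z" z] by auto
    then have "z \<in> F n"
      unfolding F_def by blast
    then show ?thesis
      by blast
  qed
  ultimately obtain n where "interior (F n) \<noteq> {}"
    using banach_closed_cover_interior[of F] by blast
  then obtain z0 \<rho> where "\<rho> > 0" "ball z0 \<rho> \<subseteq> F n"
    by (meson equals0I mem_interior)
  then show ?thesis
    by (intro exI[of _ z0] exI[of _ \<rho>] exI[of _ "1 / real (Suc n)"] exI[of _ "real n"])
      (auto simp: F_def)
qed

lemma semigroup_locally_bounded:
  "\<exists>r>0. \<exists>t0>0. \<exists>M. \<forall>t\<in>{0..t0}. \<forall>z\<in>ball x r. norm (S t z) \<le> M"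
proof -
  obtain z0 \<rho> t1 m where "0 < \<rho>" "0 < t1" and m: "\<And>t u. t \<in> {0..t1} \<Longrightarrow> u \<in> ball z0 \<rho> \<Longrightarrow> norm (S t u) \<le> m"
    using semigroup_bounded_on_some_ball by blast
  define p where "p = 2 *\<^sub>R x - z0"
  obtain \<tau>x \<tau>p where "0 < \<tau>x" "0 < \<tau>p"
    and \<tau>x: "\<And>t. t \<in> {0..\<tau>x} \<Longrightarrow> norm (S t x - x) < 1"
    and \<tau>p: "\<And>t. t \<in> {0..\<tau>p} \<Longrightarrow> norm (S t p - p) < 1"
    using semigroup_near_identity[of 1 x] semigroup_near_identity[of 1 p] by auto
  define t0 where "t0 = min t1 (min \<tau>x \<tau>p)"
  have "norm (S t z) \<le> 2 * (norm x + 1) + (norm p + 1) + m"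
    if t: "t \<in> {0..t0}" and z: "z \<in> ball x (\<rho> / 2)" for t z
  proof -
    have "norm (S t z) \<le> 2 * norm (S t x) + norm (S t p) + m"
      unfolding p_def using t m
      by (intro convex_op_bounded_on_ball_transfer[OF semigroup_convex _ z]) (auto simp: t0_def)
    also have "\<dots> \<le> 2 * (norm x + 1) + (norm p + 1) + m"
      using \<tau>x[of t] \<tau>p[of t] t norm_triangle_sub[of "S t x" x] norm_triangle_sub[of "S t p" p]
      by (intro add_mono mult_left_mono) (auto simp: t0_def)
    finally show ?thesis .
  qed
  moreover have "0 < \<rho> / 2" "0 < t0"
    using \<open>0 < \<rho>\<close> \<open>0 < t1\<close> \<open>0 < \<tau>x\<close> \<open>0 < \<tau>p\<close> by (auto simp: t0_def)
  ultimately show ?thesis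
    by blast
qed

lemma semigroup_locally_lipschitz:
  "\<exists>r>0. \<exists>t0>0. \<exists>L. \<forall>t\<in>{0..t0}. L-lipschitz_on (ball x r) (S t)"
proof -
  obtain r t0 M where "r > 0" "t0 > 0" and M: "\<And>t z. t \<in> {0..t0} \<Longrightarrow> z \<in> ball x r \<Longrightarrow> norm (S t z) \<le> M"
    using semigroup_locally_bounded[of x] by blast
  have "cball x (3 * (r / 4)) \<subseteq> ball x r"
    using \<open>r > 0\<close> by auto
  have "(2 * M / (r / 4))-lipschitz_on (ball x (r / 4)) (S t)" if "t \<in> {0..t0}" for t
  proof (rule lipschitz_on_subset)
    show "(2 * M / (r / 4))-lipschitz_on (cball x (r / 4)) (S t)"
      using that M \<open>r > 0\<close> \<open>cball x (3 * (r / 4)) \<subseteq> ball x r\<close>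
      by (intro convex_op_lipschitz_on_cball semigroup_convex) auto
  qed (rule ball_subset_cball)
  moreover have "0 < r / 4"
    using \<open>r > 0\<close> by simp
  ultimately show ?thesis
    using \<open>t0 > 0\<close> by blast
qed

lemma semigroup_near_identity_uniformly:
  assumes "0 < e"
  shows "\<exists>\<rho>>0. \<exists>\<tau>>0. \<forall>t\<in>{0..\<tau>}. \<forall>q\<in>ball p \<rho>. norm (S t q - p) < e"
proof -
  obtain r t0 L where "r > 0" "t0 > 0" and lip: "\<And>t. t \<in> {0..t0} \<Longrightarrow> L-lipschitz_on (ball p r) (S t)"
    using semigroup_locally_lipschitz[of p] by blast
  obtain \<tau> where "\<tau> > 0" and \<tau>: "\<And>t. t \<in> {0..\<tau>} \<Longrightarrow> norm (S t p - p) < e / 2"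
    using semigroup_near_identity[of "e / 2" p] assms by auto
  have "0 \<le> L"
    using lip[of 0] \<open>t0 > 0\<close> lipschitz_on_nonneg by auto
  define \<rho> where "\<rho> = min r (e / (2 * (L + 1)))"
  have "norm (S t q - p) < e" if t: "t \<in> {0..min t0 \<tau>}" and q: "q \<in> ball p \<rho>" for t q
  proof -
    have "norm (S t q - S t p) \<le> L * norm (q - p)"
      using lip[of t] t q \<open>r > 0\<close> by (intro lipschitz_on_normD) (auto simp: \<rho>_def)
    also have "\<dots> \<le> L * (e / (2 * (L + 1)))"
      using q \<open>0 \<le> L\<close> by (intro mult_left_mono) (auto simp: \<rho>_def dist_norm norm_minus_commute)
    also have "\<dots> \<le> e / 2"
      using \<open>0 \<le> L\<close> assms by (simp add: field_simps)
    finally show ?thesis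
      using \<tau>[of t] t norm_triangle_ineq[of "S t q - S t p" "S t p - p"] by auto
  qed
  moreover have "0 < \<rho>" "0 < min t0 \<tau>"
    using \<open>r > 0\<close> \<open>t0 > 0\<close> \<open>\<tau> > 0\<close> \<open>0 \<le> L\<close> assms by (auto simp: \<rho>_def)
  ultimately show ?thesis
    by blast
qed

lemma semigroup_difference_quotient_bound:
  assumes "open U" "w \<in> U" "0 < h"
    and lip: "\<And>t. t \<in> {0..h} \<Longrightarrow> L-lipschitz_on U (S t)"
    and der: "((\<lambda>s. (1 / s) *\<^sub>R (S s w - w)) \<longlongrightarrow> v) (at_right 0)"
    and bound: "\<And>t. t \<in> {0..h} \<Longrightarrow> norm (S t (w + v) - S t w - v) + norm (S t w - S t (w - v) - v) \<le> B"
  shows "norm ((1 / h) *\<^sub>R (S h w - w) - v) \<le> B"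
proof (rule field_le_epsilon)
  fix e :: real assume "0 < e"
  have "0 \<le> L"
    using lip[of 0] \<open>0 < h\<close> lipschitz_on_nonneg by auto
  have "eventually (\<lambda>\<delta>. norm ((1 / \<delta>) *\<^sub>R (S \<delta> w - w) - v) < e / (L + 1)
      \<and> S \<delta> w \<in> U \<and> w + \<delta> *\<^sub>R v \<in> U \<and> \<delta> \<le> 1) (at_right 0)"
  proof (intro eventually_conj)
    show "eventually (\<lambda>\<delta>. norm ((1 / \<delta>) *\<^sub>R (S \<delta> w - w) - v) < e / (L + 1)) (at_right 0)"
      using tendstoD[OF der, of "e / (L + 1)"] \<open>0 < e\<close> \<open>0 \<le> L\<close> by (simp add: dist_norm)
    show "eventually (\<lambda>\<delta>. S \<delta> w \<in> U) (at_right 0)"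
      using topological_tendstoD[OF semigroup_tendsto_at_right_0 assms(1,2)] .
    have "((\<lambda>\<delta>. w + \<delta> *\<^sub>R v) \<longlongrightarrow> w + 0 *\<^sub>R v) (at_right 0)"
      by (intro tendsto_intros)
    then show "eventually (\<lambda>\<delta>. w + \<delta> *\<^sub>R v \<in> U) (at_right 0)"
      using topological_tendstoD[OF _ assms(1)] assms(2) by auto
    show "eventually (\<lambda>\<delta>. \<delta> \<le> (1::real)) (at_right 0)"
      by (auto simp: eventually_at_right_field intro!: exI[of _ 1])
  qed
  then obtain m where "0 < m"
    and \<delta>: "norm ((1 / (h / real m)) *\<^sub>R (S (h / real m) w - w) - v) < e / (L + 1)"
      "S (h / real m) w \<in> U" "w + (h / real m) *\<^sub>R v \<in> U" "h / real m \<le> 1"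
    using eventually_at_right_0_fraction[OF _ \<open>0 < h\<close>] by blast
  define \<delta> where "\<delta> = h / real m"
  have "0 < \<delta>" "real m * \<delta> = h"
    using \<open>0 < h\<close> \<open>0 < m\<close> by (auto simp: \<delta>_def)
  have "L * norm ((1 / \<delta>) *\<^sub>R (S \<delta> w - w) - v) \<le> (L + 1) * norm ((1 / \<delta>) *\<^sub>R (S \<delta> w - w) - v)"
    by (simp add: mult_right_mono)
  also have "\<dots> \<le> e"
    using \<delta>(1) \<open>0 \<le> L\<close> by (simp add: \<delta>_def field_simps)
  finally have "L * norm ((1 / \<delta>) *\<^sub>R (S \<delta> w - w) - v) \<le> e" .
  have "norm ((1 / \<delta>) *\<^sub>R (S (real (Suc k) * \<delta>) w - S (real k * \<delta>) w) - v) \<le> B + e"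
    if "k < m" for k
  proof -
    have t: "real k * \<delta> \<in> {0..h}"
      using that \<open>0 < \<delta>\<close> \<open>real m * \<delta> = h\<close> by (auto intro: mult_right_mono)
    have "S (real (Suc k) * \<delta>) w = S (real k * \<delta>) (S \<delta> w)"
      using \<open>0 < \<delta>\<close> semigroup_add[of \<delta> "real k * \<delta>" w] by (simp add: distrib_right add.commute)
    then show ?thesis
      using convex_op_difference_quotient_step[OF semigroup_convex lip[OF t], of "S \<delta> w" w \<delta> v]
        \<delta>(2-4) \<open>0 < \<delta>\<close> bound[OF t] \<open>L * norm ((1 / \<delta>) *\<^sub>R (S \<delta> w - w) - v) \<le> e\<close> t
      unfolding \<delta>_def[symmetric] by simp
  qed
  then have "norm ((1 / (real m * \<delta>)) *\<^sub>R (S (real m * \<delta>) w - S (real 0 * \<delta>) w) - v) \<le> B + e"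
    using \<open>0 < m\<close> \<open>0 < \<delta>\<close> by (intro norm_average_difference_quotient_le[of _ _ "\<lambda>k. S (real k * \<delta>) w"])
  then show "norm ((1 / h) *\<^sub>R (S h w - w) - v) \<le> B + e"
    using \<open>real m * \<delta> = h\<close> by (simp add: semigroup_zero)
qed

lemma semigroup_increment_defects_small:
  assumes "0 < e"
  shows "\<exists>\<rho>>0. \<exists>\<tau>>0. \<forall>t\<in>{0..\<tau>}. \<forall>w\<in>ball x \<rho>. \<forall>v\<in>ball y \<rho>.
    norm (S t (w + v) - S t w - v) + norm (S t w - S t (w - v) - v) < e"
proof -
  have "0 < e / 6"
    using assms by simp
  obtain \<rho>1 \<tau>1 \<rho>2 \<tau>2 \<rho>3 \<tau>3 where "0 < \<rho>1" "0 < \<tau>1" "0 < \<rho>2" "0 < \<tau>2" "0 < \<rho>3" "0 < \<tau>3"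
    and near1: "\<And>t q. t \<in> {0..\<tau>1} \<Longrightarrow> q \<in> ball (x + y) \<rho>1 \<Longrightarrow> norm (S t q - (x + y)) < e / 6"
    and near2: "\<And>t q. t \<in> {0..\<tau>2} \<Longrightarrow> q \<in> ball x \<rho>2 \<Longrightarrow> norm (S t q - x) < e / 6"
    and near3: "\<And>t q. t \<in> {0..\<tau>3} \<Longrightarrow> q \<in> ball (x - y) \<rho>3 \<Longrightarrow> norm (S t q - (x - y)) < e / 6"
    using semigroup_near_identity_uniformly[OF \<open>0 < e / 6\<close>, of "x + y"]
      semigroup_near_identity_uniformly[OF \<open>0 < e / 6\<close>, of x]
      semigroup_near_identity_uniformly[OF \<open>0 < e / 6\<close>, of "x - y"]
    by metis
  define \<rho> where "\<rho> = min (min (\<rho>1 / 2) \<rho>2) (min (\<rho>3 / 2) (e / 6))"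
  define \<tau> where "\<tau> = min \<tau>1 (min \<tau>2 \<tau>3)"
  have "norm (S t (w + v) - S t w - v) + norm (S t w - S t (w - v) - v) < e"
    if t: "t \<in> {0..\<tau>}" and w: "w \<in> ball x \<rho>" and v: "v \<in> ball y \<rho>" for t w v
  proof -
    have "w + v \<in> ball (x + y) \<rho>1"
      using w v dist_triangle_add_half[of x w \<rho>1 y v] by (simp add: \<rho>_def)
    moreover have "w - v \<in> ball (x - y) \<rho>3"
      using w v dist_triangle_add_half[of x w \<rho>3 "- y" "- v"] by (simp add: \<rho>_def dist_minus)
    moreover have "w \<in> ball x \<rho>2" "norm (y - v) < e / 6"
      using w v by (auto simp: \<rho>_def dist_norm)
    moreover have "t \<in> {0..\<tau>1}" "t \<in> {0..\<tau>2}" "t \<in> {0..\<tau>3}"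
      using t by (auto simp: \<tau>_def)
    ultimately show ?thesis
      using near1 near2 near3
        norm_diff_diff_le[of "S t (w + v)" "S t w" v "x + y" x]
        norm_diff_diff_le[of "S t w" "S t (w - v)" v x "x - y"]
      by fastforce
  qed
  moreover have "0 < \<rho>" "0 < \<tau>"
    using \<open>0 < \<rho>1\<close> \<open>0 < \<tau>1\<close> \<open>0 < \<rho>2\<close> \<open>0 < \<tau>2\<close> \<open>0 < \<rho>3\<close> \<open>0 < \<tau>3\<close> assms
    by (auto simp: \<rho>_def \<tau>_def)
  ultimately show ?thesis
    by blast
qed

lemma semigroup_tendsto_difference_quotient_of_approximants:
  assumes der: "\<And>n. ((\<lambda>h. (1 / h) *\<^sub>R (S h (xs n) - xs n)) \<longlongrightarrow> v n) (at_right 0)"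
    and "xs \<longlonglongrightarrow> x" "v \<longlonglongrightarrow> y"
  shows "((\<lambda>h. (1 / h) *\<^sub>R (S h x - x)) \<longlongrightarrow> y) (at_right 0)"
proof (rule tendstoI)
  fix e :: real assume "0 < e"
  obtain r t0 L where "0 < r" "0 < t0" and lip: "\<And>t. t \<in> {0..t0} \<Longrightarrow> L-lipschitz_on (ball x r) (S t)"
    using semigroup_locally_lipschitz[of x] by blast
  obtain \<rho> \<tau> where "0 < \<rho>" "0 < \<tau>" and small: "\<And>t w u. t \<in> {0..\<tau>} \<Longrightarrow> w \<in> ball x \<rho> \<Longrightarrow> u \<in> ball y \<rho> \<Longrightarrow>
      norm (S t (w + u) - S t w - u) + norm (S t w - S t (w - u) - u) < e / 2"
    using semigroup_increment_defects_small[of "e / 2" x y] \<open>0 < e\<close> by auto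
  have "norm ((1 / h) *\<^sub>R (S h x - x) - y) \<le> e / 2" if "0 < h" "h \<le> min t0 \<tau>" for h
  proof -
    have "eventually (\<lambda>n. xs n \<in> ball x (min r \<rho>) \<and> v n \<in> ball y \<rho>) sequentially"
      using assms(2,3) \<open>0 < r\<close> \<open>0 < \<rho>\<close>
      by (intro eventually_conj topological_tendstoD[where S = "ball _ _"]) auto
    then have "eventually (\<lambda>n. norm ((1 / h) *\<^sub>R (S h (xs n) - xs n) - v n) \<le> e / 2) sequentially"
    proof eventually_elim
      case (elim n)
      have "L-lipschitz_on (ball x r) (S t)" if "t \<in> {0..h}" for t
        using that \<open>h \<le> min t0 \<tau>\<close> by (auto intro: lip)
      moreover have "norm (S t (xs n + v n) - S t (xs n) - v n) + norm (S t (xs n) - S t (xs n - v n) - v n)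
          \<le> e / 2" if "t \<in> {0..h}" for t
        using small[of t "xs n" "v n"] that \<open>h \<le> min t0 \<tau>\<close> elim by auto
      ultimately show ?case
        using elim \<open>0 < h\<close> by (intro semigroup_difference_quotient_bound[OF open_ball _ _ _ der]) auto
    qed
    moreover have "(\<lambda>n. (1 / h) *\<^sub>R (S h (xs n) - xs n) - v n) \<longlonglongrightarrow> (1 / h) *\<^sub>R (S h x - x) - y"
      using \<open>0 < h\<close> assms(2,3)
      by (intro tendsto_intros continuous_on_tendsto_compose[OF semigroup_continuous]) auto
    ultimately show ?thesis
      by (intro tendsto_upperbound[OF tendsto_norm]) auto
  qed
  then have "eventually (\<lambda>h. norm ((1 / h) *\<^sub>R (S h x - x) - y) \<le> e / 2) (at_right 0)"
    unfolding eventually_at_right_field using \<open>0 < t0\<close> \<open>0 < \<tau>\<close>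
    by (intro exI[of _ "min t0 \<tau>"]) auto
  then show "eventually (\<lambda>h. dist ((1 / h) *\<^sub>R (S h x - x)) y < e) (at_right 0)"
    by eventually_elim (use \<open>0 < e\<close> in \<open>auto simp: dist_norm\<close>)
qed

end

lemma tendsto_generator:
  "x \<in> gen_domain S \<Longrightarrow> ((\<lambda>h. (1 / h) *\<^sub>R (S h x - x)) \<longlongrightarrow> generator S x) (at_right 0)"
  unfolding gen_domain_def generator_def by (auto simp: tendsto_Lim)

lemma gen_domain_generatorI:
  "((\<lambda>h. (1 / h) *\<^sub>R (S h x - x)) \<longlongrightarrow> y) (at_right 0) \<Longrightarrow> x \<in> gen_domain S \<and> generator S x = y"
  unfolding gen_domain_def generator_def by (auto intro: tendsto_Lim)

theorem proposition3p4:
  fixes S :: "real \<Rightarrow> 'a::banach_lattice \<Rightarrow> 'a"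
    and xs :: "nat \<Rightarrow> 'a" and x y :: 'a
  assumes "order_continuous_norm TYPE('a)"
    and "convex_C0_semigroup S"
    and "\<And>n. xs n \<in> gen_domain S"
    and "xs \<longlonglongrightarrow> x"
    and "(\<lambda>n. generator S (xs n)) \<longlonglongrightarrow> y"
  shows "x \<in> gen_domain S \<and> generator S x = y"
proof -
  have "((\<lambda>h. (1 / h) *\<^sub>R (S h x - x)) \<longlongrightarrow> y) (at_right 0)"
    using semigroup_tendsto_difference_quotient_of_approximants[OF assms(2) tendsto_generator[OF assms(3)]]
      assms(4,5) .
  then show ?thesis
    by (rule gen_domain_generatorI)
qed

end
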